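(* Let $m\geq1$ and $e\geq0$ with $m\equiv 2^e-1 \pmod{2^{e+1}}$ (i.e. $e$ is the length of the final block of consecutive ones in the binary expansion of $m$; $e=0$ iff $m$ is even). Then $G(m)\leq 2^e-1$, with equality if $m$ is even or if $m=2^e-1$. In fact $G(m,s)\leq 2^e-1$ for all $s\geq\max\{(m+1)/2^e,2\}$. Specifically, if $m>2^e-1$ and $\sigma=(m+1)/2^e$ (an integer greater than $2$), then the product of $\sigma$-th zero-divisors $$(x_1+x_\sigma)^{m+2^e}(x_2+x_\sigma)^{m+2^e}\cdots(x_{\sigma-1}+x_\sigma)^{m+2^e}\in H^*((\mathbb{R}\mathrm{P}^m)^{\times\sigma};\mathbb{Z}_2)$$ is nonzero.
   Context: $H^*((\mathbb{R}\mathrm{P}^m)^{\times s};\mathbb{Z}_2)=\mathbb{Z}_2[x_1,\ldots,x_s]/(x_i^{m+1})$ with $x_i$ the pullback of the generator of $H^1(\mathbb{R}\mathrm{P}^m;\mathbb{Z}_2)$ under the $i$-th projection. The $s$-th zero-divisors are the elements of the kernel of the map $\Delta_s^*$ induced by the diagonal $\mathbb{R}\mathrm{P}^m\to(\mathbb{R}\mathrm{P}^m)^{\times s}$, and $\operatorname{zcl}_s(\mathbb{R}\mathrm{P}^m)$ is the maximal number of $s$-th zero-divisors with nonzero product. $G(m,s)=sm-\operatorname{zcl}_s(\mathbb{R}\mathrm{P}^m)$; the sequence $G(m,2)\geq G(m,3)\geq\cdots\geq0$ is non-increasing, and $G(m)$ denotes its eventual (stable) value. *)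

theory Defs
  imports Complex_Main "HOL-Library.Z2"
begin

text \<open>Model of H^*((RP^m)^s; Z_2) = Z_2[x_1,...,x_s]/(x_i^(m+1)).
  A monomial x_1^(a 1) ... x_s^(a s) is an exponent function a :: nat => nat
  with a i <= m for all i and a i = 0 for i outside {1..s}.
  An element of the ring is a Z_2-valued (type bit) coefficient function on
  monomials, vanishing outside the set of admissible monomials.\<close>

definition mono_set :: "nat \<Rightarrow> nat \<Rightarrow> (nat \<Rightarrow> nat) set" where
  "mono_set m s = {a. (\<forall>i. a i \<le> m) \<and> (\<forall>i. i \<notin> {1..s} \<longrightarrow> a i = 0)}"

type_synonym tpoly = "(nat \<Rightarrow> nat) \<Rightarrow> bit"

definition tp_elem :: "nat \<Rightarrow> nat \<Rightarrow> tpoly \<Rightarrow> bool" where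
  "tp_elem m s f \<longleftrightarrow> (\<forall>a. a \<notin> mono_set m s \<longrightarrow> f a = 0)"

definition tp_zero :: tpoly where
  "tp_zero = (\<lambda>_. 0)"

definition tp_one :: tpoly where
  "tp_one = (\<lambda>a. if a = (\<lambda>_. 0) then 1 else 0)"

text \<open>the generator x_i (pullback of the generator of H^1(RP^m) under the i-th projection)\<close>
definition tp_var :: "nat \<Rightarrow> tpoly" where
  "tp_var i = (\<lambda>a. if a = (\<lambda>j. if j = i then 1 else 0) then 1 else 0)"

definition tp_add :: "tpoly \<Rightarrow> tpoly \<Rightarrow> tpoly" where
  "tp_add f g = (\<lambda>a. f a + g a)"

definition tp_mult :: "nat \<Rightarrow> nat \<Rightarrow> tpoly \<Rightarrow> tpoly \<Rightarrow> tpoly" where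
  "tp_mult m s f g = (\<lambda>c. if c \<in> mono_set m s then
      (\<Sum>a\<in>mono_set m s. \<Sum>b\<in>mono_set m s.
          if (\<lambda>i. a i + b i) = c then f a * g b else 0)
    else 0)"

definition tp_pow :: "nat \<Rightarrow> nat \<Rightarrow> tpoly \<Rightarrow> nat \<Rightarrow> tpoly" where
  "tp_pow m s f k = ((tp_mult m s f) ^^ k) tp_one"

definition tp_prod :: "nat \<Rightarrow> nat \<Rightarrow> tpoly list \<Rightarrow> tpoly" where
  "tp_prod m s fs = foldr (tp_mult m s) fs tp_one"

text \<open>The map induced by the diagonal RP^m -> (RP^m)^s, x_i |-> x; the result is the
  coefficient function of an element of H^*(RP^m;Z_2) = Z_2[x]/(x^(m+1)).\<close>
definition diag :: "nat \<Rightarrow> nat \<Rightarrow> tpoly \<Rightarrow> (nat \<Rightarrow> bit)" where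
  "diag m s f = (\<lambda>d. if d \<le> m then
      (\<Sum>a\<in>mono_set m s. if (\<Sum>i\<in>{1..s}. a i) = d then f a else 0) else 0)"

definition zero_divisor :: "nat \<Rightarrow> nat \<Rightarrow> tpoly \<Rightarrow> bool" where
  "zero_divisor m s f \<longleftrightarrow> tp_elem m s f \<and> diag m s f = (\<lambda>_. 0)"

definition zcl :: "nat \<Rightarrow> nat \<Rightarrow> nat" where
  "zcl m s = (GREATEST k. \<exists>fs. length fs = k \<and> (\<forall>f\<in>set fs. zero_divisor m s f)
                                 \<and> tp_prod m s fs \<noteq> tp_zero)"

definition G :: "nat \<Rightarrow> nat \<Rightarrow> nat" where
  "G m s = s * m - zcl m s"

definition G_stable :: "nat \<Rightarrow> nat" where
  "G_stable m = (THE g. \<forall>\<^sub>F s in sequentially. G m s = g)"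

end

theory Submission
  imports Defs "HOL-Library.Poly_Mapping"
begin

text \<open>Write \<open>m + 1 = \<sigma> 2^e\<close> with \<open>\<sigma>\<close> odd. In the product of the \<open>(x_i + x_\<sigma>)^(m + 2^e)\<close>, \<open>i < \<sigma>\<close>,
  the monomial \<open>x_1^m \<cdots> x_(\<sigma>-1)^m x_\<sigma>^((\<sigma>-1) 2^e)\<close> only arises by taking \<open>x_i^m x_\<sigma>^(2^e)\<close> from
  every factor, so its coefficient is a power of \<open>binom(m + 2^e, m)\<close>, which is odd by Lucas'
  theorem because \<open>(m + 2^e) div 2^e = \<sigma>\<close> is odd. This gives \<open>(\<sigma> - 1)(m + 2^e)\<close> zero-divisors
  with nonzero product, i.e. \<open>G(m, \<sigma>) \<le> 2^e - 1\<close>; appending \<open>m\<close> copies of \<open>x_(s+1) + x_1\<close>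
  shows that \<open>G(m, s)\<close> is non-increasing in \<open>s\<close>.

  For \<open>m = 2^e - 1\<close> the matching lower bound is computed in the polynomial ring: modulo the
  truncation, zero-divisors lie in the ideal generated by the \<open>x_i + x_s\<close>, and
  \<open>(x_i + x_s)^(2^e) = x_i^(2^e) + x_s^(2^e)\<close> is truncated away, so by pigeonhole every product
  of more than \<open>(s - 1) m\<close> zero-divisors vanishes.\<close>

(* keep sums and products of bits in ring form rather than xor/and *)
declare add_bit_eq_xor [simp del] mult_bit_eq_and [simp del]

lemma of_nat_bit: "(of_nat n :: bit) = of_bool (odd n)"
  by (induction n) auto

lemma bit_mult_eq_1_iff [simp]: "(a * b = (1::bit)) \<longleftrightarrow> a = 1 \<and> b = 1"
  by (cases a; cases b) simp_all

lemma bit_add_self [simp]: "(b::bit) + b = 0"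
  by (cases b) simp_all

abbreviation total_deg :: "nat \<Rightarrow> (nat \<Rightarrow> nat) \<Rightarrow> nat" where
  "total_deg s a \<equiv> \<Sum>i\<in>{1..s}. a i"

definition unit_exp :: "nat \<Rightarrow> nat \<Rightarrow> nat" where
  "unit_exp i = (\<lambda>j. if j = i then 1 else 0)"

definition bi_exp :: "nat \<Rightarrow> nat \<Rightarrow> nat \<Rightarrow> nat \<Rightarrow> nat \<Rightarrow> nat" where
  "bi_exp i j p q = (\<lambda>t. if t = i then p else if t = j then q else 0)"

lemma finite_mono_set: "finite (mono_set m s)"
proof -
  have "finite {a. \<forall>i. (i \<in> {1..s} \<longrightarrow> a i \<in> {..m}) \<and> (i \<notin> {1..s} \<longrightarrow> a i = 0)}"
    by (rule finite_set_of_finite_funs) auto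
  moreover have "mono_set m s = {a. \<forall>i. (i \<in> {1..s} \<longrightarrow> a i \<in> {..m}) \<and> (i \<notin> {1..s} \<longrightarrow> a i = 0)}"
    by (auto simp: mono_set_def) (metis le0)
  ultimately show ?thesis
    by simp
qed

lemma zero_in_mono_set: "(\<lambda>_. 0) \<in> mono_set m s"
  by (simp add: mono_set_def)

lemma unit_exp_in_mono_set: "i \<in> {1..s} \<Longrightarrow> 1 \<le> m \<Longrightarrow> unit_exp i \<in> mono_set m s"
  by (auto simp: unit_exp_def mono_set_def)

lemma bi_exp_in_mono_set:
  "i \<in> {1..s} \<Longrightarrow> j \<in> {1..s} \<Longrightarrow> p \<le> m \<Longrightarrow> q \<le> m \<Longrightarrow> bi_exp i j p q \<in> mono_set m s"
  by (auto simp: bi_exp_def mono_set_def)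

lemma mono_set_mono: "s \<le> t \<Longrightarrow> mono_set m s \<subseteq> mono_set m t"
  by (auto simp: mono_set_def)

lemma total_deg_eq_0_iff: "a \<in> mono_set m s \<Longrightarrow> total_deg s a = 0 \<longleftrightarrow> a = (\<lambda>_. 0)"
  by (auto simp: mono_set_def fun_eq_iff)

lemma total_deg_le: "a \<in> mono_set m s \<Longrightarrow> total_deg s a \<le> s * m"
  using sum_bounded_above[of "{1..s}" a m] by (auto simp: mono_set_def)

lemma total_deg_unit_exp: "i \<in> {1..s} \<Longrightarrow> total_deg s (unit_exp i) = 1"
  by (simp add: unit_exp_def)

lemma tp_pow_simps [simp]:
  "tp_pow m s f 0 = tp_one"
  "tp_pow m s f (Suc n) = tp_mult m s f (tp_pow m s f n)"
  by (simp_all add: tp_pow_def)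

lemma tp_prod_simps [simp]:
  "tp_prod m s [] = tp_one"
  "tp_prod m s (f # fs) = tp_mult m s f (tp_prod m s fs)"
  by (simp_all add: tp_prod_def)

lemma tp_var_apply: "tp_var i a = (if a = unit_exp i then 1 else 0)"
  by (simp add: tp_var_def unit_exp_def)

lemma tp_elem_nonzero: "tp_elem m s f \<Longrightarrow> f a \<noteq> 0 \<Longrightarrow> a \<in> mono_set m s"
  by (auto simp: tp_elem_def)

lemma tp_elem_tp_one: "tp_elem m s tp_one"
  by (simp add: tp_elem_def tp_one_def zero_in_mono_set)

lemma tp_elem_tp_mult: "tp_elem m s (tp_mult m s f g)"
  by (simp add: tp_elem_def tp_mult_def)

lemma tp_elem_tp_pow: "tp_elem m s (tp_pow m s f n)"
  by (cases n) (simp_all add: tp_elem_tp_one tp_elem_tp_mult)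

lemma tp_elem_tp_prod: "tp_elem m s (tp_prod m s fs)"
  by (cases fs) (simp_all add: tp_elem_tp_one tp_elem_tp_mult)

lemma tp_mult_nonzeroE:
  assumes "tp_mult m s f g c \<noteq> 0"
  obtains a b where "c \<in> mono_set m s" "a \<in> mono_set m s" "b \<in> mono_set m s"
    "(\<lambda>i. a i + b i) = c" "f a \<noteq> 0" "g b \<noteq> 0"
proof -
  have c: "c \<in> mono_set m s"
    using assms by (auto simp: tp_mult_def split: if_splits)
  then have "(\<Sum>a\<in>mono_set m s. \<Sum>b\<in>mono_set m s.
      if (\<lambda>i. a i + b i) = c then f a * g b else 0) \<noteq> 0"
    using assms by (simp add: tp_mult_def)
  then obtain a where a: "a \<in> mono_set m s"
    and "(\<Sum>b\<in>mono_set m s. if (\<lambda>i. a i + b i) = c then f a * g b else 0) \<noteq> 0"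
    by (rule sum.not_neutral_contains_not_neutral)
  from this(2) obtain b where b: "b \<in> mono_set m s"
    and "(if (\<lambda>i. a i + b i) = c then f a * g b else 0) \<noteq> 0"
    by (rule sum.not_neutral_contains_not_neutral)
  then have "(\<lambda>i. a i + b i) = c" "f a \<noteq> 0" "g b \<noteq> 0"
    by (auto split: if_splits)
  with a b c that show thesis
    by blast
qed

lemma tp_mult_eq_single_term:
  assumes c: "c \<in> mono_set m s" and a0: "a0 \<in> mono_set m s" and b0: "b0 \<in> mono_set m s"
    and sum: "(\<lambda>i. a0 i + b0 i) = c"
    and unique: "\<And>a b. a \<in> mono_set m s \<Longrightarrow> b \<in> mono_set m s \<Longrightarrow> (\<lambda>i. a i + b i) = c
                   \<Longrightarrow> f a \<noteq> 0 \<Longrightarrow> g b \<noteq> 0 \<Longrightarrow> a = a0"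
  shows "tp_mult m s f g c = f a0 * g b0"
proof -
  have summand: "(if (\<lambda>i. a i + b i) = c then f a * g b else 0)
      = (if a = a0 \<and> b = b0 then f a0 * g b0 else 0)"
    if "a \<in> mono_set m s" "b \<in> mono_set m s" for a b
  proof (cases "(\<lambda>i. a i + b i) = c")
    case True
    then have "a = a0 \<Longrightarrow> b = b0"
      using sum by (auto simp: fun_eq_iff) (metis add_left_cancel)
    then show ?thesis
      using True unique[OF that True] by auto
  next
    case False
    then show ?thesis
      using sum by auto
  qed
  have "tp_mult m s f g c
      = (\<Sum>a\<in>mono_set m s. \<Sum>b\<in>mono_set m s. if a = a0 \<and> b = b0 then f a0 * g b0 else 0)"
    using c by (simp add: tp_mult_def summand cong: sum.cong)
  also have "\<dots> = (\<Sum>a\<in>mono_set m s. if a = a0 then f a0 * g b0 else 0)"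
    by (rule sum.cong) (use b0 finite_mono_set in auto)
  also have "\<dots> = f a0 * g b0"
    using a0 finite_mono_set by simp
  finally show ?thesis .
qed

lemma tp_mult_add_left:
  "tp_mult m s (tp_add f g) h = tp_add (tp_mult m s f h) (tp_mult m s g h)"
proof -
  have "(if (\<lambda>i. a i + b i) = c then (f a + g a) * h b else 0)
      = (if (\<lambda>i. a i + b i) = c then f a * h b else 0)
      + (if (\<lambda>i. a i + b i) = c then g a * h b else 0)" for a b c
    by (simp add: distrib_right)
  then show ?thesis
    by (simp add: tp_mult_def tp_add_def sum.distrib fun_eq_iff)
qed

lemma tp_mult_var_apply:
  assumes i: "i \<in> {1..s}" and m: "1 \<le> m" and c: "c \<in> mono_set m s"
  shows "tp_mult m s (tp_var i) f c = (if 1 \<le> c i then f (c(i := c i - 1)) else 0)"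
proof (cases "1 \<le> c i")
  case True
  have "c(i := c i - 1) \<in> mono_set m s"
    using c by (auto simp: mono_set_def intro: le_trans[OF diff_le_self])
  moreover have "(\<lambda>j. unit_exp i j + (c(i := c i - 1)) j) = c"
    using True by (auto simp: unit_exp_def fun_eq_iff)
  ultimately have "tp_mult m s (tp_var i) f c = tp_var i (unit_exp i) * f (c(i := c i - 1))"
    by (intro tp_mult_eq_single_term c unit_exp_in_mono_set i m)
      (auto simp: tp_var_apply split: if_splits)
  with True show ?thesis
    by (simp add: tp_var_apply)
next
  case False
  have "tp_mult m s (tp_var i) f c = 0"
  proof (rule ccontr)
    assume "tp_mult m s (tp_var i) f c \<noteq> 0"
    then obtain a b where "(\<lambda>j. a j + b j) = c" "tp_var i a \<noteq> 0"
      by (rule tp_mult_nonzeroE)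
    then have "1 \<le> c i"
      by (auto simp: tp_var_apply unit_exp_def fun_eq_iff split: if_splits)
    with False show False ..
  qed
  with False show ?thesis
    by simp
qed

subsection \<open>Comparison with the polynomial ring\<close>

type_synonym poly2 = "(nat \<Rightarrow>\<^sub>0 nat) \<Rightarrow>\<^sub>0 bit"

definition tp_of :: "nat \<Rightarrow> nat \<Rightarrow> poly2 \<Rightarrow> tpoly" where
  "tp_of m s p = (\<lambda>a. if a \<in> mono_set m s then Poly_Mapping.lookup p (Abs_poly_mapping a) else 0)"

definition poly_of :: "nat \<Rightarrow> nat \<Rightarrow> tpoly \<Rightarrow> poly2" where
  "poly_of m s f = (\<Sum>a\<in>{a \<in> mono_set m s. f a \<noteq> 0}. Poly_Mapping.single (Abs_poly_mapping a) 1)"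

lemma lookup_Abs_poly_mapping_mono:
  assumes "a \<in> mono_set m s"
  shows "Poly_Mapping.lookup (Abs_poly_mapping a) = a"
proof -
  have "finite {i. a i \<noteq> 0}"
    by (rule finite_subset[of _ "{1..s}"]) (use assms in \<open>auto simp: mono_set_def\<close>)
  then show ?thesis
    by simp
qed

lemma inj_on_Abs_poly_mapping_mono: "inj_on Abs_poly_mapping (mono_set m s)"
  by (rule inj_onI) (metis lookup_Abs_poly_mapping_mono)

lemma Abs_poly_mapping_mono_summand:
  assumes c: "c \<in> mono_set m s" and eq: "Abs_poly_mapping c = l + q"
  shows "l \<in> Abs_poly_mapping ` mono_set m s"
proof -
  have le: "Poly_Mapping.lookup l i \<le> c i" for i
    using arg_cong[OF eq, of "\<lambda>x. Poly_Mapping.lookup x i"] c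
    by (simp add: lookup_add lookup_Abs_poly_mapping_mono)
  have "Poly_Mapping.lookup l i \<le> m" for i
    using le[of i] c by (auto simp: mono_set_def intro: le_trans)
  moreover have "Poly_Mapping.lookup l i = 0" if "i \<notin> {1..s}" for i
    using le[of i] c that by (simp add: mono_set_def)
  ultimately have "Poly_Mapping.lookup l \<in> mono_set m s"
    by (simp add: mono_set_def)
  then show ?thesis
    by (metis image_eqI lookup_inverse)
qed

lemma tp_of_mult: "tp_of m s (p * q) = tp_mult m s (tp_of m s p) (tp_of m s q)"
proof
  fix c
  show "tp_of m s (p * q) c = tp_mult m s (tp_of m s p) (tp_of m s q) c"
  proof (cases "c \<in> mono_set m s")
    case False
    then show ?thesis
      by (simp add: tp_of_def tp_mult_def)
  next
    case c: True
    let ?U = "Abs_poly_mapping ` mono_set m s"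
    let ?C = "Abs_poly_mapping c"
    have fin: "finite ?U"
      using finite_mono_set by simp
    have inner: "(\<Sum>q'. Poly_Mapping.lookup q q' when ?C = l + q') = (\<Sum>q'\<in>?U. Poly_Mapping.lookup q q' when ?C = l + q')" for l
    proof (rule Sum_any.expand_superset[OF fin], rule subsetI)
      fix q' assume "q' \<in> {q'. (Poly_Mapping.lookup q q' when ?C = l + q') \<noteq> 0}"
      then have "?C = q' + l"
        by (auto simp: add.commute when_def split: if_splits)
      then show "q' \<in> ?U"
        by (rule Abs_poly_mapping_mono_summand[OF c])
    qed
    have outer: "(\<Sum>l. Poly_Mapping.lookup p l * (\<Sum>q'\<in>?U. Poly_Mapping.lookup q q' when ?C = l + q'))
        = (\<Sum>l\<in>?U. Poly_Mapping.lookup p l * (\<Sum>q'\<in>?U. Poly_Mapping.lookup q q' when ?C = l + q'))"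
    proof (rule Sum_any.expand_superset[OF fin], rule subsetI)
      fix l assume "l \<in> {l. Poly_Mapping.lookup p l * (\<Sum>q'\<in>?U. Poly_Mapping.lookup q q' when ?C = l + q') \<noteq> 0}"
      then obtain q' where "(Poly_Mapping.lookup q q' when ?C = l + q') \<noteq> 0"
        using sum.not_neutral_contains_not_neutral by fastforce
      then have "?C = l + q'"
        by (auto simp: when_def split: if_splits)
      then show "l \<in> ?U"
        by (rule Abs_poly_mapping_mono_summand[OF c])
    qed
    have sum_eq: "(?C = Abs_poly_mapping a + Abs_poly_mapping b) \<longleftrightarrow> (\<lambda>i. a i + b i) = c"
      if "a \<in> mono_set m s" "b \<in> mono_set m s" for a b
      unfolding poly_mapping_eq_iff using that c
      by (auto simp: lookup_add lookup_Abs_poly_mapping_mono fun_eq_iff)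
    have "Poly_Mapping.lookup (p * q) ?C = (\<Sum>l\<in>?U. Poly_Mapping.lookup p l * (\<Sum>q'\<in>?U. Poly_Mapping.lookup q q' when ?C = l + q'))"
      by (simp add: lookup_mult inner outer)
    also have "\<dots> = (\<Sum>a\<in>mono_set m s. \<Sum>b\<in>mono_set m s. Poly_Mapping.lookup p (Abs_poly_mapping a)
        * (Poly_Mapping.lookup q (Abs_poly_mapping b) when ?C = Abs_poly_mapping a + Abs_poly_mapping b))"
      by (simp add: sum.reindex[OF inj_on_Abs_poly_mapping_mono] sum_distrib_left)
    also have "\<dots> = (\<Sum>a\<in>mono_set m s. \<Sum>b\<in>mono_set m s.
        if (\<lambda>i. a i + b i) = c then tp_of m s p a * tp_of m s q b else 0)"
      by (intro sum.cong refl) (simp add: sum_eq tp_of_def when_def)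
    finally show ?thesis
      using c by (simp add: tp_mult_def tp_of_def[of m s "p * q"])
  qed
qed

lemma tp_of_one: "tp_of m s 1 = tp_one"
proof
  fix a
  have "a \<in> mono_set m s \<Longrightarrow> Abs_poly_mapping a = 0 \<longleftrightarrow> a = (\<lambda>_. 0)"
    unfolding poly_mapping_eq_iff by (simp add: lookup_Abs_poly_mapping_mono fun_eq_iff)
  then show "tp_of m s 1 a = tp_one a"
    using zero_in_mono_set[of m s] by (auto simp: tp_of_def tp_one_def lookup_one)
qed

lemma tp_of_prod_list: "tp_of m s (prod_list ps) = tp_prod m s (map (tp_of m s) ps)"
  by (induction ps) (simp_all add: tp_of_one tp_of_mult)

lemma tp_of_poly_of: "tp_elem m s f \<Longrightarrow> tp_of m s (poly_of m s f) = f"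
proof
  fix a
  assume f: "tp_elem m s f"
  show "tp_of m s (poly_of m s f) a = f a"
  proof (cases "a \<in> mono_set m s")
    case True
    have "Poly_Mapping.lookup (poly_of m s f) (Abs_poly_mapping a) = (\<Sum>b\<in>{a \<in> mono_set m s. f a \<noteq> 0}. if b = a then 1 else 0)"
      unfolding poly_of_def lookup_sum
      by (intro sum.cong refl)
        (use True inj_on_Abs_poly_mapping_mono[of m s] in \<open>auto simp: lookup_single when_def dest: inj_onD\<close>)
    also have "\<dots> = f a"
      using True finite_mono_set by (simp add: sum.delta')
    finally show ?thesis
      using True by (simp add: tp_of_def)
  next
    case False
    then show ?thesis
      using f by (simp add: tp_of_def tp_elem_def)
  qed
qed

lemma tp_elem_tp_of_poly_ofE:
  assumes "tp_elem m s f"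
  obtains p where "f = tp_of m s p"
  using tp_of_poly_of[OF assms] by metis

lemma tp_mult_one_left: "tp_elem m s f \<Longrightarrow> tp_mult m s tp_one f = f"
  by (elim tp_elem_tp_of_poly_ofE) (metis tp_of_mult tp_of_one mult_1)

lemma tp_mult_assoc:
  assumes "tp_elem m s f" "tp_elem m s g" "tp_elem m s h"
  shows "tp_mult m s (tp_mult m s f g) h = tp_mult m s f (tp_mult m s g h)"
  using assms by (elim tp_elem_tp_of_poly_ofE) (simp add: tp_of_mult[symmetric] mult.assoc)

lemma funpow_tp_mult:
  assumes "tp_elem m s h" "tp_elem m s f"
  shows "(tp_mult m s h ^^ n) f = tp_mult m s (tp_pow m s h n) f"
proof (induction n)
  case 0
  show ?case
    by (simp add: tp_mult_one_left assms)
next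
  case (Suc n)
  then show ?case
    by (simp add: tp_mult_assoc assms tp_elem_tp_pow)
qed

lemma tp_prod_replicate_append:
  assumes "tp_elem m s h"
  shows "tp_prod m s (replicate n h @ fs) = tp_mult m s (tp_pow m s h n) (tp_prod m s fs)"
proof -
  have "tp_prod m s (replicate n h @ fs) = (tp_mult m s h ^^ n) (tp_prod m s fs)"
    by (induction n) simp_all
  then show ?thesis
    by (simp add: funpow_tp_mult assms tp_elem_tp_prod)
qed

lemma tp_prod_concat_replicate:
  assumes "\<And>x. x \<in> set xs \<Longrightarrow> tp_elem m s (h x)"
  shows "tp_prod m s (concat (map (\<lambda>x. replicate k (h x)) xs))
    = tp_prod m s (map (\<lambda>x. tp_pow m s (h x) k) xs)"
  using assms by (induction xs) (simp_all add: tp_prod_replicate_append)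

subsection \<open>Binomial coefficients modulo 2\<close>

lemma odd_choose_iff:
  "odd (n choose k) \<longleftrightarrow> \<not> (odd k \<and> even n) \<and> odd ((n div 2) choose (k div 2))"
proof (induction n arbitrary: k)
  case 0
  then show ?case
    by (cases k) (auto simp: binomial_eq_0_iff dest!: odd_pos, presburger)
next
  case (Suc n)
  show ?case
  proof (cases k)
    case (Suc k')
    have "odd (Suc n choose Suc k') \<longleftrightarrow> odd (n choose k') \<noteq> odd (n choose Suc k')"
      by simp
    then show ?thesis
      unfolding Suc Suc.IH by (cases "even n"; cases "even k'") (auto elim!: evenE oddE)
  qed simp
qed

lemma odd_choose_pow2: "odd (n div 2 ^ e) \<Longrightarrow> odd (n choose 2 ^ e)"
proof (induction e arbitrary: n)
  case (Suc e)
  then have "odd ((n div 2) choose 2 ^ e)"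
    by (simp add: div_mult2_eq)
  then show ?case
    by (subst odd_choose_iff) simp
qed simp

lemma odd_choose_add_pow2:
  assumes "m + 1 = \<sigma> * 2 ^ e" and "odd \<sigma>"
  shows "odd ((m + 2 ^ e) choose m)"
proof -
  have "m + 2 ^ e = (2 ^ e - 1) + \<sigma> * 2 ^ e"
    using assms(1) by (simp add: Suc_leI)
  then have "(m + 2 ^ e) div 2 ^ e = \<sigma> + (2 ^ e - 1) div 2 ^ e"
    by (simp only: div_mult_self1 power_not_zero zero_neq_numeral not_False_eq_True)
  then have "(m + 2 ^ e) div 2 ^ e = \<sigma>"
    by simp
  then have "odd ((m + 2 ^ e) choose 2 ^ e)"
    using odd_choose_pow2 assms(2) by simp
  then show ?thesis
    using binomial_symmetric[of m "m + 2 ^ e"] by simp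
qed

lemma tp_add_var_var_nonzero:
  "tp_add (tp_var i) (tp_var j) a \<noteq> 0 \<Longrightarrow> a = unit_exp i \<or> a = unit_exp j"
  by (auto simp: tp_add_def tp_var_apply split: if_splits)

lemma tp_pow_var_add_var_nonzero:
  assumes "i \<noteq> j"
  shows "tp_pow m s (tp_add (tp_var i) (tp_var j)) n a \<noteq> 0 \<Longrightarrow>
    a \<in> mono_set m s \<and> (\<forall>t. t \<noteq> i \<and> t \<noteq> j \<longrightarrow> a t = 0) \<and> a i + a j = n"
proof (induction n arbitrary: a)
  case 0
  then show ?case
    by (simp add: tp_one_def zero_in_mono_set split: if_splits)
next
  case (Suc n)
  from Suc.prems have "tp_mult m s (tp_add (tp_var i) (tp_var j)) (tp_pow m s (tp_add (tp_var i) (tp_var j)) n) a \<noteq> 0"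
    by simp
  then obtain u v where "a \<in> mono_set m s" "(\<lambda>t. u t + v t) = a"
    and "tp_add (tp_var i) (tp_var j) u \<noteq> 0" "tp_pow m s (tp_add (tp_var i) (tp_var j)) n v \<noteq> 0"
    by (blast elim: tp_mult_nonzeroE)
  with Suc.IH tp_add_var_var_nonzero assms show ?case
    by (fastforce simp: unit_exp_def)
qed

lemma tp_pow_var_add_var_bi_exp:
  assumes i: "i \<in> {1..s}" and j: "j \<in> {1..s}" and ij: "i \<noteq> j" and m: "1 \<le> m"
  shows "p \<le> m \<Longrightarrow> q \<le> m \<Longrightarrow> p + q = n \<Longrightarrow>
    tp_pow m s (tp_add (tp_var i) (tp_var j)) n (bi_exp i j p q) = of_nat (n choose p)"
proof (induction n arbitrary: p q)
  case 0
  then show ?case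
    by (simp add: tp_one_def bi_exp_def fun_eq_iff)
next
  case (Suc n)
  let ?F = "tp_pow m s (tp_add (tp_var i) (tp_var j)) n"
  have c: "bi_exp i j p q \<in> mono_set m s"
    using bi_exp_in_mono_set[OF i j Suc.prems(1,2)] .
  have "(bi_exp i j p q)(i := p - 1) = bi_exp i j (p - 1) q"
    "(bi_exp i j p q)(j := q - 1) = bi_exp i j p (q - 1)"
    "bi_exp i j p q i = p" "bi_exp i j p q j = q"
    using ij by (auto simp: bi_exp_def fun_eq_iff)
  then have "tp_pow m s (tp_add (tp_var i) (tp_var j)) (Suc n) (bi_exp i j p q)
      = (if 1 \<le> p then ?F (bi_exp i j (p - 1) q) else 0) + (if 1 \<le> q then ?F (bi_exp i j p (q - 1)) else 0)"
    by (simp only: tp_pow_simps tp_mult_add_left)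
      (simp add: tp_add_def tp_mult_var_apply[OF i m c] tp_mult_var_apply[OF j m c])
  also have "\<dots> = of_nat (Suc n choose p)"
    using Suc.prems by (cases p; cases q) (simp_all add: Suc.IH)
  finally show ?case .
qed

text \<open>Since \<open>g\<close> does not involve \<open>x_i\<close>, all of \<open>x_i^(c i)\<close> has to come from the first factor.\<close>

lemma tp_mult_pow_var_add_var_apply:
  assumes i: "i \<in> {1..s}" and j: "j \<in> {1..s}" and ij: "i \<noteq> j" and m: "1 \<le> m"
    and c: "c \<in> mono_set m s" and q: "q \<le> c j"
    and free: "\<And>b. g b \<noteq> 0 \<Longrightarrow> b i = 0"
  shows "tp_mult m s (tp_pow m s (tp_add (tp_var i) (tp_var j)) (c i + q)) g c
    = of_nat ((c i + q) choose c i) * g (c(i := 0, j := c j - q))"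
proof -
  let ?h = "tp_pow m s (tp_add (tp_var i) (tp_var j)) (c i + q)"
  have cm: "c i \<le> m" "c j \<le> m"
    using c by (auto simp: mono_set_def)
  have "tp_mult m s ?h g c = ?h (bi_exp i j (c i) q) * g (c(i := 0, j := c j - q))"
  proof (rule tp_mult_eq_single_term[OF c])
    show "bi_exp i j (c i) q \<in> mono_set m s"
      using i j cm q by (intro bi_exp_in_mono_set) auto
    show "c(i := 0, j := c j - q) \<in> mono_set m s"
      using c by (auto simp: mono_set_def intro: le_trans[OF diff_le_self])
    show "(\<lambda>t. bi_exp i j (c i) q t + (c(i := 0, j := c j - q)) t) = c"
      using ij q by (auto simp: bi_exp_def fun_eq_iff)
  next
    fix a b
    assume sum: "(\<lambda>t. a t + b t) = c" and "?h a \<noteq> 0" "g b \<noteq> 0"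
    then have "(\<forall>t. t \<noteq> i \<and> t \<noteq> j \<longrightarrow> a t = 0) \<and> a i + a j = c i + q"
      using tp_pow_var_add_var_nonzero[OF ij] by blast
    moreover have "a i = c i"
      using free[OF \<open>g b \<noteq> 0\<close>] fun_cong[OF sum, of i] by simp
    ultimately show "a = bi_exp i j (c i) q"
      using ij by (auto simp: bi_exp_def fun_eq_iff)
  qed
  also have "?h (bi_exp i j (c i) q) = of_nat ((c i + q) choose c i)"
    using cm q by (intro tp_pow_var_add_var_bi_exp i j ij m) auto
  finally show ?thesis .
qed

lemma zero_divisor_var_add_var:
  assumes i: "i \<in> {1..s}" and j: "j \<in> {1..s}" and ij: "i \<noteq> j" and m: "1 \<le> m"
  shows "zero_divisor m s (tp_add (tp_var i) (tp_var j))"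
proof -
  let ?h = "tp_add (tp_var i) (tp_var j)"
  have "tp_elem m s ?h"
    unfolding tp_elem_def using tp_add_var_var_nonzero unit_exp_in_mono_set[OF _ m] i j by blast
  moreover have "diag m s ?h d = 0" for d
  proof -
    have "unit_exp i \<noteq> unit_exp j"
      using ij by (auto simp: unit_exp_def fun_eq_iff)
    then have "(if total_deg s a = d then ?h a else 0)
        = (if a = unit_exp i then of_bool (d = 1) else 0) + (if a = unit_exp j then of_bool (d = 1) else 0)"
      if "a \<in> mono_set m s" for a
      using total_deg_unit_exp[OF i] total_deg_unit_exp[OF j] by (auto simp: tp_add_def tp_var_apply)
    then have "(\<Sum>a\<in>mono_set m s. if total_deg s a = d then ?h a else 0)
        = of_bool (d = 1) + of_bool (d = 1)"
      using finite_mono_set unit_exp_in_mono_set[OF i m] unit_exp_in_mono_set[OF j m]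
      by (simp add: sum.distrib cong: sum.cong)
    then show ?thesis
      by (simp add: diag_def)
  qed
  ultimately show ?thesis
    by (simp add: zero_divisor_def fun_eq_iff)
qed

lemma zero_divisor_pow_var_add_var:
  assumes i: "i \<in> {1..s}" and j: "j \<in> {1..s}" and ij: "i \<noteq> j" and n: "m < n"
  shows "zero_divisor m s (tp_pow m s (tp_add (tp_var i) (tp_var j)) n)"
proof -
  let ?f = "tp_pow m s (tp_add (tp_var i) (tp_var j)) n"
  have deg: "total_deg s a = n" if "?f a \<noteq> 0" for a
  proof -
    have "(\<forall>t. t \<noteq> i \<and> t \<noteq> j \<longrightarrow> a t = 0) \<and> a i + a j = n"
      using tp_pow_var_add_var_nonzero[OF ij that] by blast
    moreover have "total_deg s a = (\<Sum>t\<in>{i, j}. a t)"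
      using calculation i j by (intro sum.mono_neutral_right) auto
    ultimately show ?thesis
      using ij by simp
  qed
  have "?f a = 0" if "total_deg s a \<le> m" for a
    by (rule ccontr) (use deg[of a] that n in simp)
  then have "diag m s ?f d = 0" for d
    by (auto simp: diag_def intro!: sum.neutral)
  then show ?thesis
    by (simp add: zero_divisor_def fun_eq_iff tp_elem_tp_pow)
qed

lemma tp_prod_free_var:
  "(\<forall>f\<in>set fs. \<forall>a. f a \<noteq> 0 \<longrightarrow> a t = 0) \<Longrightarrow> tp_prod m s fs a \<noteq> 0 \<Longrightarrow> a t = 0"
proof (induction fs arbitrary: a)
  case Nil
  then show ?case
    by (simp add: tp_one_def split: if_splits)
next
  case (Cons f fs)
  from Cons.prems(2) have "tp_mult m s f (tp_prod m s fs) a \<noteq> 0"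
    by simp
  then obtain u v where "(\<lambda>i. u i + v i) = a" "f u \<noteq> 0" "tp_prod m s fs v \<noteq> 0"
    by (blast elim: tp_mult_nonzeroE)
  with Cons show ?case
    by auto
qed

lemma tp_prod_pows_var_add_var_apply:
  assumes m: "m + 1 = \<sigma> * 2 ^ e" and e: "2 ^ e \<le> m" and \<sigma>: "odd \<sigma>"
  shows "1 \<le> j \<Longrightarrow> j \<le> \<sigma> \<Longrightarrow>
    tp_prod m \<sigma> (map (\<lambda>i. tp_pow m \<sigma> (tp_add (tp_var i) (tp_var \<sigma>)) (m + 2 ^ e)) [j..<\<sigma>])
      (\<lambda>t. if j \<le> t \<and> t < \<sigma> then m else if t = \<sigma> then (\<sigma> - j) * 2 ^ e else 0) = 1"
proof (induction "\<sigma> - j" arbitrary: j)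
  case 0
  then show ?case
    by (simp add: tp_one_def fun_eq_iff)
next
  case (Suc x)
  let ?g = "\<lambda>i. tp_pow m \<sigma> (tp_add (tp_var i) (tp_var \<sigma>)) (m + 2 ^ e)"
  let ?c = "\<lambda>j t. if j \<le> t \<and> t < \<sigma> then m else if t = \<sigma> then (\<sigma> - j) * 2 ^ e else 0"
  let ?rest = "tp_prod m \<sigma> (map ?g [Suc j..<\<sigma>])"
  have j: "1 \<le> j" "j < \<sigma>"
    using Suc by auto
  have pow: "(1::nat) \<le> 2 ^ e"
    by simp
  then have m1: "1 \<le> m"
    using e by linarith
  have "(\<sigma> - j) * 2 ^ e \<le> (\<sigma> - 1) * 2 ^ e"
    using j by (intro mult_right_mono) auto
  also have "\<dots> = m + 1 - 2 ^ e"
    using m by (simp add: diff_mult_distrib)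
  also have "\<dots> \<le> m"
    using pow by linarith
  finally have c: "?c j \<in> mono_set m \<sigma>"
    using j e by (auto simp: mono_set_def)
  have free: "b j = 0" if "?rest b \<noteq> 0" for b
  proof (rule tp_prod_free_var[OF _ that], intro ballI allI impI)
    fix f a
    assume "f \<in> set (map ?g [Suc j..<\<sigma>])" "f a \<noteq> 0"
    then obtain i where "Suc j \<le> i" "i < \<sigma>" "?g i a \<noteq> 0"
      by auto
    with tp_pow_var_add_var_nonzero[of i \<sigma>] show "a j = 0"
      by auto
  qed
  have shift: "(?c j)(j := 0, \<sigma> := ?c j \<sigma> - 2 ^ e) = ?c (Suc j)"
    using j by (auto simp: fun_eq_iff diff_mult_distrib Suc_diff_Suc)
  have "tp_mult m \<sigma> (?g j) ?rest (?c j)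
      = tp_mult m \<sigma> (tp_pow m \<sigma> (tp_add (tp_var j) (tp_var \<sigma>)) (?c j j + 2 ^ e)) ?rest (?c j)"
    using j by simp
  also have "\<dots> = of_nat ((?c j j + 2 ^ e) choose ?c j j) * ?rest ((?c j)(j := 0, \<sigma> := ?c j \<sigma> - 2 ^ e))"
    by (rule tp_mult_pow_var_add_var_apply) (use j c free m1 in auto)
  also have "\<dots> = of_nat ((m + 2 ^ e) choose m) * ?rest (?c (Suc j))"
    using j by (simp only: shift) simp
  finally have "tp_mult m \<sigma> (?g j) ?rest (?c j) = of_nat ((m + 2 ^ e) choose m) * ?rest (?c (Suc j))" .
  moreover have "?rest (?c (Suc j)) = 1"
    using Suc j by simp
  ultimately show ?case
    using j odd_choose_add_pow2[OF m \<sigma>] by (simp add: upt_conv_Cons of_nat_bit)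
qed

lemma tp_prod_pows_var_add_var_nonzero:
  assumes "m + 1 = \<sigma> * 2 ^ e" and "2 ^ e \<le> m" and "odd \<sigma>"
  shows "tp_prod m \<sigma> (map (\<lambda>i. tp_pow m \<sigma> (tp_add (tp_var i) (tp_var \<sigma>)) (m + 2 ^ e)) [1..<\<sigma>]) \<noteq> tp_zero"
proof -
  have "1 \<le> \<sigma>"
    using \<open>odd \<sigma>\<close> by (simp add: odd_pos Suc_leI)
  with tp_prod_pows_var_add_var_apply[OF assms, of 1] show ?thesis
    by (auto simp: tp_zero_def fun_eq_iff)
qed

definition has_zd_product :: "nat \<Rightarrow> nat \<Rightarrow> nat \<Rightarrow> bool" where
  "has_zd_product m s k \<longleftrightarrow>
    (\<exists>fs. length fs = k \<and> (\<forall>f\<in>set fs. zero_divisor m s f) \<and> tp_prod m s fs \<noteq> tp_zero)"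

lemma zero_divisor_const: "zero_divisor m s f \<Longrightarrow> f (\<lambda>_. 0) = 0"
proof -
  assume "zero_divisor m s f"
  then have "0 = diag m s f 0"
    by (simp add: zero_divisor_def)
  also have "\<dots> = (\<Sum>a\<in>mono_set m s. if total_deg s a = 0 then f a else 0)"
    by (simp only: diag_def le0 if_True)
  also have "\<dots> = (\<Sum>a\<in>mono_set m s. if a = (\<lambda>_. 0) then f a else 0)"
    by (intro sum.cong refl) (simp only: total_deg_eq_0_iff)
  also have "\<dots> = f (\<lambda>_. 0)"
    using finite_mono_set zero_in_mono_set by simp
  finally show ?thesis
    by simp
qed

lemma tp_prod_zero_divisors_nonzero:
  "(\<forall>f\<in>set fs. zero_divisor m s f) \<Longrightarrow> tp_prod m s fs a \<noteq> 0 \<Longrightarrow>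
    a \<in> mono_set m s \<and> length fs \<le> total_deg s a"
proof (induction fs arbitrary: a)
  case Nil
  then show ?case
    by (simp add: tp_one_def zero_in_mono_set split: if_splits)
next
  case (Cons f fs)
  from Cons.prems(2) have "tp_mult m s f (tp_prod m s fs) a \<noteq> 0"
    by simp
  then obtain u v where a: "a \<in> mono_set m s" and u: "u \<in> mono_set m s"
    and "(\<lambda>i. u i + v i) = a" "f u \<noteq> 0" "tp_prod m s fs v \<noteq> 0"
    by (blast elim: tp_mult_nonzeroE)
  have "u \<noteq> (\<lambda>_. 0)"
    using zero_divisor_const[of m s f] Cons.prems(1) \<open>f u \<noteq> 0\<close> by auto
  then have "1 \<le> total_deg s u"
    using total_deg_eq_0_iff[OF u] by linarith
  moreover have "length fs \<le> total_deg s v"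
    using Cons.IH Cons.prems(1) \<open>tp_prod m s fs v \<noteq> 0\<close> by simp
  moreover have "total_deg s a = total_deg s u + total_deg s v"
    using \<open>(\<lambda>i. u i + v i) = a\<close> by (auto simp: sum.distrib)
  ultimately show ?case
    using a by simp
qed

lemma has_zd_product_le: "has_zd_product m s k \<Longrightarrow> k \<le> s * m"
proof -
  assume "has_zd_product m s k"
  then obtain fs a where "length fs = k" "\<forall>f\<in>set fs. zero_divisor m s f" "tp_prod m s fs a \<noteq> 0"
    by (auto simp: has_zd_product_def tp_zero_def fun_eq_iff)
  then show ?thesis
    using tp_prod_zero_divisors_nonzero total_deg_le le_trans by metis
qed

lemma has_zd_product_0: "has_zd_product m s 0"
  by (auto simp: has_zd_product_def tp_one_def tp_zero_def fun_eq_iff)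

lemma has_zd_product_zcl: "has_zd_product m s (zcl m s)"
  unfolding zcl_def has_zd_product_def[symmetric]
  using has_zd_product_0 has_zd_product_le by (rule GreatestI_nat)

lemma le_zcl:
  assumes "has_zd_product m s k"
  shows "k \<le> zcl m s"
  unfolding zcl_def has_zd_product_def[symmetric]
  using assms has_zd_product_le by (rule Greatest_le_nat)

lemma zcl_le: "zcl m s \<le> s * m"
  using has_zd_product_zcl by (rule has_zd_product_le)

subsection \<open>Monotonicity in the number of factors\<close>

lemma tp_elem_mono: "tp_elem m s f \<Longrightarrow> s \<le> t \<Longrightarrow> tp_elem m t f"
  using mono_set_mono[of s t m] by (auto simp: tp_elem_def)

lemma total_deg_mono: "a \<in> mono_set m s \<Longrightarrow> s \<le> t \<Longrightarrow> total_deg t a = total_deg s a"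
  by (intro sum.mono_neutral_right) (auto simp: mono_set_def)

lemma diag_mono:
  assumes f: "tp_elem m s f" and st: "s \<le> t"
  shows "diag m t f = diag m s f"
proof
  fix d
  have "(\<Sum>a\<in>mono_set m t. if total_deg t a = d then f a else 0)
      = (\<Sum>a\<in>mono_set m s. if total_deg t a = d then f a else 0)"
    using f mono_set_mono[OF st] by (intro sum.mono_neutral_right) (auto simp: finite_mono_set tp_elem_def)
  also have "\<dots> = (\<Sum>a\<in>mono_set m s. if total_deg s a = d then f a else 0)"
    by (intro sum.cong refl) (simp only: total_deg_mono[OF _ st])
  finally show "diag m t f d = diag m s f d"
    by (simp add: diag_def)
qed

lemma zero_divisor_mono: "zero_divisor m s f \<Longrightarrow> s \<le> t \<Longrightarrow> zero_divisor m t f"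
  using tp_elem_mono[of m s f t] diag_mono[of m s f t] by (simp add: zero_divisor_def)

lemma tp_mult_mono:
  assumes f: "tp_elem m s f" and g: "tp_elem m s g" and st: "s \<le> t"
  shows "tp_mult m t f g = tp_mult m s f g"
proof
  fix c
  have sub: "mono_set m s \<subseteq> mono_set m t"
    using st by (rule mono_set_mono)
  show "tp_mult m t f g c = tp_mult m s f g c"
  proof (cases "c \<in> mono_set m s")
    case True
    have "(\<Sum>b\<in>mono_set m t. if (\<lambda>i. a i + b i) = c then f a * g b else 0)
        = (\<Sum>b\<in>mono_set m s. if (\<lambda>i. a i + b i) = c then f a * g b else 0)" for a
      using g sub finite_mono_set by (intro sum.mono_neutral_right) (auto simp: tp_elem_def)
    then have "(\<Sum>a\<in>mono_set m t. \<Sum>b\<in>mono_set m t. if (\<lambda>i. a i + b i) = c then f a * g b else 0)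
        = (\<Sum>a\<in>mono_set m t. \<Sum>b\<in>mono_set m s. if (\<lambda>i. a i + b i) = c then f a * g b else 0)"
      by simp
    also have "\<dots> = (\<Sum>a\<in>mono_set m s. \<Sum>b\<in>mono_set m s. if (\<lambda>i. a i + b i) = c then f a * g b else 0)"
      using f sub finite_mono_set
      by (intro sum.mono_neutral_right) (auto simp: tp_elem_def intro!: sum.neutral)
    finally show ?thesis
      using True sub by (auto simp: tp_mult_def)
  next
    case False
    have "tp_mult m t f g c = 0"
    proof (rule ccontr)
      assume "tp_mult m t f g c \<noteq> 0"
      then obtain a b where "c \<in> mono_set m t" "(\<lambda>i. a i + b i) = c" "f a \<noteq> 0" "g b \<noteq> 0"
        by (rule tp_mult_nonzeroE)
      moreover have "a \<in> mono_set m s" "b \<in> mono_set m s"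
        using tp_elem_nonzero f g calculation by blast+
      ultimately have "c \<in> mono_set m s"
        by (auto simp: mono_set_def)
      with False show False ..
    qed
    with False show ?thesis
      by (simp add: tp_mult_def)
  qed
qed

lemma tp_prod_mono:
  "(\<forall>f\<in>set fs. tp_elem m s f) \<Longrightarrow> s \<le> t \<Longrightarrow> tp_prod m t fs = tp_prod m s fs"
  by (induction fs) (simp_all add: tp_mult_mono tp_elem_tp_prod)

text \<open>The witness appends \<open>m\<close> copies of \<open>x_(s+1) + x_1\<close>: the coefficient of \<open>x_(s+1)^m c\<close> in the
  new product equals that of \<open>c\<close> in the old one.\<close>

lemma has_zd_product_Suc:
  assumes s: "1 \<le> s" and m: "1 \<le> m" and k: "has_zd_product m s k"
  shows "has_zd_product m (Suc s) (k + m)"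
proof -
  obtain fs where fs: "length fs = k" "\<forall>f\<in>set fs. zero_divisor m s f" "tp_prod m s fs \<noteq> tp_zero"
    using k by (auto simp: has_zd_product_def)
  let ?Q = "tp_prod m s fs"
  let ?h = "tp_add (tp_var (Suc s)) (tp_var 1)"
  obtain c where Qc: "?Q c \<noteq> 0"
    using fs(3) by (auto simp: tp_zero_def fun_eq_iff)
  then have c: "c \<in> mono_set m s"
    by (rule tp_elem_nonzero[OF tp_elem_tp_prod])
  have h: "zero_divisor m (Suc s) ?h"
    using s m by (intro zero_divisor_var_add_var) auto
  have Q: "tp_prod m (Suc s) fs = ?Q"
    using fs(2) by (intro tp_prod_mono) (auto simp: zero_divisor_def)
  have free: "b (Suc s) = 0" if "?Q b \<noteq> 0" for b
  proof -
    have "b \<in> mono_set m s"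
      using that by (rule tp_elem_nonzero[OF tp_elem_tp_prod])
    then show ?thesis
      by (simp add: mono_set_def)
  qed
  have c': "c(Suc s := m) \<in> mono_set m (Suc s)"
    using c by (auto simp: mono_set_def)
  have "tp_prod m (Suc s) (replicate m ?h @ fs) (c(Suc s := m))
      = tp_mult m (Suc s) (tp_pow m (Suc s) ?h ((c(Suc s := m)) (Suc s) + 0)) ?Q (c(Suc s := m))"
    using h by (simp add: tp_prod_replicate_append Q zero_divisor_def)
  also have "\<dots> = ?Q c"
    using s m c' free c
    by (subst tp_mult_pow_var_add_var_apply) (auto simp: mono_set_def fun_upd_idem)
  finally have "tp_prod m (Suc s) (replicate m ?h @ fs) \<noteq> tp_zero"
    using Qc by (auto simp: tp_zero_def fun_eq_iff)
  moreover have "\<forall>f\<in>set (replicate m ?h @ fs). zero_divisor m (Suc s) f"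
    using fs(2) h zero_divisor_mono[of m s _ "Suc s"] by auto
  ultimately show ?thesis
    unfolding has_zd_product_def using fs(1) by (intro exI[of _ "replicate m ?h @ fs"]) auto
qed

lemma G_Suc_le:
  assumes "1 \<le> s" and "1 \<le> m"
  shows "G m (Suc s) \<le> G m s"
  using le_zcl[OF has_zd_product_Suc[OF assms has_zd_product_zcl]] zcl_le[of m s]
  by (simp add: G_def)

lemma G_antimono:
  assumes "1 \<le> s" and "s \<le> t" and "1 \<le> m"
  shows "G m t \<le> G m s"
  using assms(2)
proof (induction t rule: dec_induct)
  case (step t)
  then show ?case
    using G_Suc_le[of t m] assms by simp
qed simp

subsection \<open>The upper bound\<close>

lemma has_zd_product_pows:
  assumes m: "1 \<le> m"
    and nonzero: "tp_prod m \<sigma> (map (\<lambda>i. tp_pow m \<sigma> (tp_add (tp_var i) (tp_var \<sigma>)) k) [1..<\<sigma>]) \<noteq> tp_zero"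
  shows "has_zd_product m \<sigma> ((\<sigma> - 1) * k)"
proof -
  let ?fs = "concat (map (\<lambda>i. replicate k (tp_add (tp_var i) (tp_var \<sigma>))) [1..<\<sigma>])"
  have zd: "zero_divisor m \<sigma> (tp_add (tp_var i) (tp_var \<sigma>))" if "i \<in> set [1..<\<sigma>]" for i
    using that m by (intro zero_divisor_var_add_var) auto
  then have "tp_prod m \<sigma> ?fs = tp_prod m \<sigma> (map (\<lambda>i. tp_pow m \<sigma> (tp_add (tp_var i) (tp_var \<sigma>)) k) [1..<\<sigma>])"
    by (intro tp_prod_concat_replicate) (simp add: zero_divisor_def)
  moreover have "length ?fs = (\<sigma> - 1) * k"
    by (simp add: length_concat comp_def sum_list_triv)
  moreover have "\<forall>f\<in>set ?fs. zero_divisor m \<sigma> f"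
    using zd by (auto simp del: set_upt)
  ultimately show ?thesis
    unfolding has_zd_product_def using nonzero by (intro exI[of _ ?fs]) simp
qed

lemma G_le_pow2_pred:
  assumes m: "m + 1 = \<sigma> * 2 ^ e" and \<sigma>: "odd \<sigma>" and s: "\<sigma> \<le> s" "1 \<le> s"
  shows "G m s \<le> 2 ^ e - 1"
proof (cases "\<sigma> = 1 \<or> m = 0")
  case True
  then have "G m 1 \<le> 2 ^ e - 1" "m = 0 \<longrightarrow> G m s = 0"
    using m by (auto simp: G_def)
  then show ?thesis
    using G_antimono[OF order.refl s(2), of m] by (cases "m = 0") auto
next
  case False
  with \<sigma> obtain t where t: "\<sigma> = Suc t" and "1 \<le> t" and "1 \<le> m"
    by (cases \<sigma>) auto
  have "2 * 2 ^ e \<le> \<sigma> * 2 ^ e"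
    using t \<open>1 \<le> t\<close> by (intro mult_right_mono) auto
  moreover have "(1::nat) \<le> 2 ^ e"
    by simp
  ultimately have "2 ^ e \<le> m"
    using m by linarith
  have "(\<sigma> - 1) * (m + 2 ^ e) \<le> zcl m \<sigma>"
    by (intro le_zcl has_zd_product_pows tp_prod_pows_var_add_var_nonzero m \<sigma> \<open>1 \<le> m\<close> \<open>2 ^ e \<le> m\<close>)
  moreover have "\<sigma> * m = t * m + m" "(\<sigma> - 1) * (m + 2 ^ e) = t * m + t * 2 ^ e" "m + 1 = t * 2 ^ e + 2 ^ e"
    using m by (simp_all add: t algebra_simps)
  ultimately have "G m \<sigma> \<le> 2 ^ e - 1"
    unfolding G_def by linarith
  moreover have "G m s \<le> G m \<sigma>"
    using s t \<open>1 \<le> m\<close> by (intro G_antimono) auto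
  ultimately show ?thesis
    by simp
qed

subsection \<open>The lower bound when \<open>m + 1\<close> is a power of 2\<close>

definition pvar :: "nat \<Rightarrow> poly2" where
  "pvar i = Poly_Mapping.single (Poly_Mapping.single i 1) 1"

definition pmono :: "(nat \<Rightarrow> nat) \<Rightarrow> poly2" where
  "pmono a = Poly_Mapping.single (Abs_poly_mapping a) 1"

lemma pvar_power: "pvar i ^ n = Poly_Mapping.single (Poly_Mapping.single i n) 1"
  by (induction n) (simp_all add: pvar_def mult_single single_add[symmetric] add.commute)

lemma poly2_add_self [simp]: "(p::poly2) + p = 0"
  by (rule poly_mapping_eqI) (simp only: lookup_add lookup_zero bit_add_self)

lemma poly2_two_eq_zero [simp]: "(2::poly2) = 0"
  by (metis one_add_one poly2_add_self)

lemma poly2_add_power_pow2: "((p::poly2) + q) ^ (2 ^ e) = p ^ (2 ^ e) + q ^ (2 ^ e)"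
proof (induction e)
  case (Suc e)
  have square: "(a + b) ^ 2 = a ^ 2 + b ^ 2" for a b :: poly2
    by (simp add: power2_eq_square algebra_simps)
  have "(p + q) ^ 2 ^ Suc e = ((p + q) ^ 2 ^ e) ^ 2"
    by (simp add: power_mult[symmetric] mult.commute)
  also have "\<dots> = (p ^ 2 ^ e) ^ 2 + (q ^ 2 ^ e) ^ 2"
    by (simp only: Suc square)
  also have "\<dots> = p ^ 2 ^ Suc e + q ^ 2 ^ Suc e"
    by (simp add: power_mult[symmetric] mult.commute)
  finally show ?case .
qed simp

text \<open>\<open>p\<close> lies in the ideal generated by \<open>x_1^(m+1), x_2^(m+1), \<dots>\<close>, the kernel of \<open>tp_of\<close>.\<close>

definition in_trunc_ideal :: "nat \<Rightarrow> poly2 \<Rightarrow> bool" where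
  "in_trunc_ideal m p \<longleftrightarrow> (\<forall>k\<in>Poly_Mapping.keys p. \<exists>i. m < Poly_Mapping.lookup k i)"

lemma in_trunc_ideal_0: "in_trunc_ideal m 0"
  by (simp add: in_trunc_ideal_def)

lemma in_trunc_ideal_add: "in_trunc_ideal m p \<Longrightarrow> in_trunc_ideal m q \<Longrightarrow> in_trunc_ideal m (p + q)"
  using keys_add[of p q] by (auto simp: in_trunc_ideal_def)

lemma in_trunc_ideal_mult: "in_trunc_ideal m p \<Longrightarrow> in_trunc_ideal m (p * q)"
  unfolding in_trunc_ideal_def
proof
  fix k
  assume p: "\<forall>k\<in>Poly_Mapping.keys p. \<exists>i. m < Poly_Mapping.lookup k i"
    and "k \<in> Poly_Mapping.keys (p * q)"
  then obtain a b where "k = a + b" "a \<in> Poly_Mapping.keys p"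
    using keys_mult by blast
  with p show "\<exists>i. m < Poly_Mapping.lookup k i"
    by (auto simp: lookup_add intro: trans_less_add1)
qed

lemma in_trunc_ideal_mult_left: "in_trunc_ideal m q \<Longrightarrow> in_trunc_ideal m (p * q)"
  by (simp add: in_trunc_ideal_mult mult.commute[of p])

lemma tp_of_in_trunc_ideal:
  assumes "in_trunc_ideal m p"
  shows "tp_of m s p = tp_zero"
proof
  fix a
  have "Poly_Mapping.lookup p (Abs_poly_mapping a) = 0" if a: "a \<in> mono_set m s"
  proof (rule ccontr)
    assume "Poly_Mapping.lookup p (Abs_poly_mapping a) \<noteq> 0"
    then have "Abs_poly_mapping a \<in> Poly_Mapping.keys p"
      by (simp add: in_keys_iff)
    then obtain i where "m < a i"
      using assms by (auto simp: in_trunc_ideal_def lookup_Abs_poly_mapping_mono[OF a])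
    with a show False
      by (auto simp: mono_set_def not_le[symmetric])
  qed
  then show "tp_of m s p a = tp_zero a"
    by (simp add: tp_of_def tp_zero_def)
qed

lemma in_trunc_ideal_pvar_add_pvar_power:
  assumes e: "m + 1 = 2 ^ e" and n: "m < n"
  shows "in_trunc_ideal m ((pvar i + pvar j) ^ n)"
proof -
  have "in_trunc_ideal m (pvar t ^ 2 ^ e)" for t
    using e by (auto simp: in_trunc_ideal_def pvar_power intro!: exI[of _ t])
  then have "in_trunc_ideal m ((pvar i + pvar j) ^ 2 ^ e * (pvar i + pvar j) ^ (n - 2 ^ e))"
    by (simp add: poly2_add_power_pow2 in_trunc_ideal_add in_trunc_ideal_mult)
  moreover have "2 ^ e + (n - 2 ^ e) = n"
    using e n by simp
  ultimately show ?thesis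
    by (metis power_add)
qed

text \<open>\<open>in_diag_ideal_pow m s N p\<close> says that \<open>p\<close> lies in \<open>J^N + I\<close>, where \<open>J\<close> is generated by the
  \<open>x_i + x_s\<close> (\<open>1 \<le> i < s\<close>) and \<open>I\<close> is the truncation ideal.\<close>

inductive in_diag_ideal_pow :: "nat \<Rightarrow> nat \<Rightarrow> nat \<Rightarrow> poly2 \<Rightarrow> bool" for m s where
  trunc: "in_trunc_ideal m p \<Longrightarrow> in_diag_ideal_pow m s N p"
| gen: "N \<le> sum k {1..<s} \<Longrightarrow> in_diag_ideal_pow m s N ((\<Prod>i\<in>{1..<s}. (pvar i + pvar s) ^ k i) * r)"
| add: "in_diag_ideal_pow m s N p \<Longrightarrow> in_diag_ideal_pow m s N q \<Longrightarrow> in_diag_ideal_pow m s N (p + q)"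

lemma in_diag_ideal_pow_0: "in_diag_ideal_pow m s N 0"
  by (rule in_diag_ideal_pow.trunc) (rule in_trunc_ideal_0)

lemma in_diag_ideal_pow_zero_level: "in_diag_ideal_pow m s 0 r"
  using in_diag_ideal_pow.gen[where k = "\<lambda>_. 0" and N = 0 and r = r] by simp

lemma in_diag_ideal_pow_mult:
  "in_diag_ideal_pow m s N p \<Longrightarrow> in_diag_ideal_pow m s N' q \<Longrightarrow> in_diag_ideal_pow m s (N + N') (p * q)"
proof (induction arbitrary: q rule: in_diag_ideal_pow.induct)
  case (trunc p N)
  then show ?case
    by (intro in_diag_ideal_pow.trunc in_trunc_ideal_mult)
next
  case (add N p1 p2)
  then show ?case
    by (simp add: distrib_right in_diag_ideal_pow.add)
next
  case (gen N k r)
  from gen.prems show ?case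
  proof (induction rule: in_diag_ideal_pow.induct)
    case (trunc q N')
    then show ?case
      by (intro in_diag_ideal_pow.trunc in_trunc_ideal_mult_left)
  next
    case (add N' q1 q2)
    then show ?case
      by (simp add: distrib_left in_diag_ideal_pow.add)
  next
    case (gen N' k' r')
    have "(\<Prod>i\<in>{1..<s}. (pvar i + pvar s) ^ (k i + k' i))
        = (\<Prod>i\<in>{1..<s}. (pvar i + pvar s) ^ k i) * (\<Prod>i\<in>{1..<s}. (pvar i + pvar s) ^ k' i)"
      by (simp add: power_add prod.distrib)
    then have "(\<Prod>i\<in>{1..<s}. (pvar i + pvar s) ^ k i) * r * ((\<Prod>i\<in>{1..<s}. (pvar i + pvar s) ^ k' i) * r')
        = (\<Prod>i\<in>{1..<s}. (pvar i + pvar s) ^ (k i + k' i)) * (r * r')"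
      by (simp only: mult_ac)
    moreover have "N + N' \<le> (\<Sum>i\<in>{1..<s}. k i + k' i)"
      using \<open>N \<le> sum k {1..<s}\<close> \<open>N' \<le> sum k' {1..<s}\<close> by (simp add: sum.distrib)
    then have "in_diag_ideal_pow m s (N + N') ((\<Prod>i\<in>{1..<s}. (pvar i + pvar s) ^ (k i + k' i)) * (r * r'))"
      by (rule in_diag_ideal_pow.gen)
    ultimately show ?case
      by (simp only:)
  qed
qed

lemma in_diag_ideal_pow_mult_left: "in_diag_ideal_pow m s N p \<Longrightarrow> in_diag_ideal_pow m s N (r * p)"
  using in_diag_ideal_pow_mult[OF in_diag_ideal_pow_zero_level[of m s r]] by simp

lemma in_diag_ideal_pow_sum:
  "finite A \<Longrightarrow> (\<And>a. a \<in> A \<Longrightarrow> in_diag_ideal_pow m s N (g a)) \<Longrightarrow> in_diag_ideal_pow m s N (sum g A)"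
  by (induction A rule: finite_induct) (simp_all add: in_diag_ideal_pow_0 in_diag_ideal_pow.add)

lemma in_diag_ideal_pow_prod_list:
  "\<forall>p\<in>set ps. in_diag_ideal_pow m s 1 p \<Longrightarrow> in_diag_ideal_pow m s (length ps) (prod_list ps)"
  by (induction ps) (simp_all add: in_diag_ideal_pow_zero_level in_diag_ideal_pow_mult[of _ _ 1, simplified])

text \<open>Pigeonhole: a product of more than \<open>(s - 1) m\<close> generators contains some \<open>(x_i + x_s)^(m+1)\<close>,
  and \<open>(x_i + x_s)^(2^e) = x_i^(2^e) + x_s^(2^e)\<close> is truncated away.\<close>

lemma in_diag_ideal_pow_in_trunc_ideal:
  assumes e: "m + 1 = 2 ^ e"
  shows "in_diag_ideal_pow m s N p \<Longrightarrow> (s - 1) * m < N \<Longrightarrow> in_trunc_ideal m p"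
proof (induction rule: in_diag_ideal_pow.induct)
  case (add N p q)
  then show ?case
    by (blast intro: in_trunc_ideal_add)
next
  case (gen N k r)
  have "\<exists>i\<in>{1..<s}. m < k i"
  proof (rule ccontr)
    assume "\<not> ?thesis"
    then have "sum k {1..<s} \<le> card {1..<s} * m"
      using sum_bounded_above[of "{1..<s}" k m] by (simp add: not_less)
    with gen show False
      by simp
  qed
  then obtain i where i: "i \<in> {1..<s}" "m < k i"
    by blast
  then have "(\<Prod>i\<in>{1..<s}. (pvar i + pvar s) ^ k i)
      = (pvar i + pvar s) ^ k i * (\<Prod>j\<in>{1..<s} - {i}. (pvar j + pvar s) ^ k j)"
    by (simp add: prod.remove)
  then show ?case
    using in_trunc_ideal_pvar_add_pvar_power[OF e \<open>m < k i\<close>]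
    by (simp add: mult.assoc in_trunc_ideal_mult)
qed

lemma pvar_add_pvar_in_diag_ideal_pow:
  assumes i: "i \<in> {1..s}"
  shows "in_diag_ideal_pow m s 1 (pvar i + pvar s)"
proof (cases "i = s")
  case True
  then show ?thesis
    by (simp add: in_diag_ideal_pow_0)
next
  case False
  then have i': "i \<in> {1..<s}"
    using i by auto
  have "(\<Prod>j\<in>{1..<s}. (pvar j + pvar s) ^ unit_exp i j) = pvar i + pvar s"
    using i' by (simp add: prod.remove unit_exp_def)
  moreover have "1 \<le> sum (unit_exp i) {1..<s}"
    using i' by (simp add: unit_exp_def)
  ultimately show ?thesis
    using in_diag_ideal_pow.gen[where m = m and s = s and N = 1 and k = "unit_exp i" and r = 1] by simp
qed

lemma pmono_add_pvar_power_in_diag_ideal_pow: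
  "a \<in> mono_set m s \<Longrightarrow> total_deg s a = n \<Longrightarrow> in_diag_ideal_pow m s 1 (pmono a + pvar s ^ n)"
proof (induction n arbitrary: a)
  case 0
  then have "a = (\<lambda>_. 0)"
    using total_deg_eq_0_iff by blast
  then show ?case
    by (simp add: pmono_def in_diag_ideal_pow_0)
next
  case (Suc n)
  obtain i where i: "i \<in> {1..s}" "a i \<noteq> 0"
    using Suc.prems(2) by (metis sum.neutral nat.distinct(1))
  let ?a' = "a(i := a i - 1)"
  have a': "?a' \<in> mono_set m s"
    using Suc.prems(1) by (auto simp: mono_set_def intro: le_trans[OF diff_le_self])
  have "total_deg s a = a i + (\<Sum>t\<in>{1..s} - {i}. a t)" "total_deg s ?a' = (a i - 1) + (\<Sum>t\<in>{1..s} - {i}. a t)"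
    using i by (simp_all add: sum.remove)
  then have "total_deg s ?a' = n"
    using Suc.prems(2) i by simp
  then have IH: "in_diag_ideal_pow m s 1 (pmono ?a' + pvar s ^ n)"
    using Suc.IH a' by blast
  have "Poly_Mapping.single i 1 + Abs_poly_mapping ?a' = Abs_poly_mapping a"
    by (rule poly_mapping_eqI)
      (use Suc.prems(1) a' i in \<open>simp add: lookup_add lookup_single lookup_Abs_poly_mapping_mono when_def\<close>)
  then have "pmono a = pvar i * pmono ?a'"
    by (simp add: pmono_def pvar_def mult_single)
  moreover have "pvar i * (pmono ?a' + pvar s ^ n) + pvar s ^ n * (pvar i + pvar s)
      = pvar i * pmono ?a' + pvar s ^ Suc n + (pvar i * pvar s ^ n + pvar i * pvar s ^ n)"
    by (simp add: distrib_left distrib_right mult.commute)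
  ultimately have "pmono a + pvar s ^ Suc n = pvar i * (pmono ?a' + pvar s ^ n) + pvar s ^ n * (pvar i + pvar s)"
    by simp
  then show ?case
    using IH pvar_add_pvar_in_diag_ideal_pow[OF i(1)]
    by (simp only: in_diag_ideal_pow.add in_diag_ideal_pow_mult_left)
qed

text \<open>Modulo the \<open>x_i + x_s\<close>, a zero-divisor becomes \<open>\<Sum>\<^sub>d diag f d \<cdot> x_s^d\<close>, which is \<open>0\<close> in degrees
  \<open>\<le> m\<close> and truncated away in degrees \<open>> m\<close>.\<close>

lemma poly_of_zero_divisor_in_diag_ideal_pow:
  assumes f: "zero_divisor m s f"
  shows "in_diag_ideal_pow m s 1 (poly_of m s f)"
proof -
  let ?A = "{a \<in> mono_set m s. f a \<noteq> 0}"
  let ?P = "\<Sum>a\<in>?A. pvar s ^ total_deg s a"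
  have "poly_of m s f = (\<Sum>a\<in>?A. pmono a + pvar s ^ total_deg s a) + ?P"
    by (simp only: poly_of_def pmono_def[symmetric] sum.distrib add.assoc poly2_add_self add_0_right)
  moreover have "in_diag_ideal_pow m s 1 (\<Sum>a\<in>?A. pmono a + pvar s ^ total_deg s a)"
    using finite_mono_set by (intro in_diag_ideal_pow_sum pmono_add_pvar_power_in_diag_ideal_pow) auto
  moreover have "in_trunc_ideal m ?P"
    unfolding in_trunc_ideal_def
  proof
    fix k
    assume k: "k \<in> Poly_Mapping.keys ?P"
    have "k \<in> (\<Union>a\<in>?A. Poly_Mapping.keys (pvar s ^ total_deg s a))"
      using keys_sum k ..
    then obtain a0 where "a0 \<in> ?A" "k \<in> Poly_Mapping.keys (pvar s ^ total_deg s a0)"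
      by (rule UN_E)
    then have k0: "k = Poly_Mapping.single s (total_deg s a0)"
      by (simp add: pvar_power)
    let ?d = "total_deg s a0"
    have "m < ?d"
    proof (rule ccontr)
      assume "\<not> m < ?d"
      have "Poly_Mapping.lookup ?P k = (\<Sum>a\<in>?A. if total_deg s a = ?d then 1 else 0)"
        unfolding lookup_sum k0 pvar_power
        by (intro sum.cong refl) (simp add: lookup_single when_def inj_eq)
      also have "\<dots> = (\<Sum>a\<in>?A. if total_deg s a = ?d then f a else 0)"
        by (intro sum.cong refl) auto
      also have "\<dots> = (\<Sum>a\<in>mono_set m s. if total_deg s a = ?d then f a else 0)"
        by (rule sum.mono_neutral_left) (auto simp: finite_mono_set)
      also have "\<dots> = diag m s f ?d"
        using \<open>\<not> m < ?d\<close> by (simp add: diag_def)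
      also have "\<dots> = 0"
        using f by (simp add: zero_divisor_def)
      finally show False
        using k by (simp add: in_keys_iff)
    qed
    then show "\<exists>i. m < Poly_Mapping.lookup k i"
      using k0 by (auto intro!: exI[of _ s])
  qed
  ultimately show ?thesis
    by (simp add: in_diag_ideal_pow.add in_diag_ideal_pow.trunc)
qed

lemma tp_prod_zero_divisors_eq_zero:
  assumes e: "m + 1 = 2 ^ e" and fs: "\<forall>f\<in>set fs. zero_divisor m s f" and len: "(s - 1) * m < length fs"
  shows "tp_prod m s fs = tp_zero"
proof -
  have "map (tp_of m s \<circ> poly_of m s) fs = fs"
    using fs by (induction fs) (auto simp: tp_of_poly_of zero_divisor_def)
  then have "tp_prod m s fs = tp_of m s (prod_list (map (poly_of m s) fs))"
    by (simp add: tp_of_prod_list)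
  moreover have "in_diag_ideal_pow m s (length fs) (prod_list (map (poly_of m s) fs))"
    using fs poly_of_zero_divisor_in_diag_ideal_pow in_diag_ideal_pow_prod_list[of "map (poly_of m s) fs"]
    by simp
  ultimately show ?thesis
    using in_diag_ideal_pow_in_trunc_ideal[OF e] len tp_of_in_trunc_ideal by simp
qed

lemma G_ge_pow2_pred:
  assumes e: "m + 1 = 2 ^ e" and s: "1 \<le> s"
  shows "m \<le> G m s"
proof -
  obtain fs where fs: "length fs = zcl m s" "\<forall>f\<in>set fs. zero_divisor m s f" "tp_prod m s fs \<noteq> tp_zero"
    using has_zd_product_zcl[of m s] unfolding has_zd_product_def by blast
  then have "zcl m s \<le> (s - 1) * m"
    using tp_prod_zero_divisors_eq_zero[OF e fs(2)] by (auto simp: not_less[symmetric])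
  moreover have "(s - 1) * m + m = s * m"
    using s by (cases s) auto
  ultimately show ?thesis
    unfolding G_def by linarith
qed

lemma eventually_G_eq_G_stable:
  assumes m: "1 \<le> m"
  shows "\<forall>\<^sub>F s in sequentially. G m s = G_stable m"
proof -
  define g where "g = (LEAST y. \<exists>s\<ge>1. G m s = y)"
  obtain s0 where s0: "1 \<le> s0" "G m s0 = g"
    using LeastI_ex[of "\<lambda>y. \<exists>s\<ge>1. G m s = y"] by (auto simp: g_def)
  have "G m s = g" if "s0 \<le> s" for s
  proof (rule antisym)
    show "G m s \<le> g"
      using G_antimono[OF s0(1) that m] s0(2) by simp
    show "g \<le> G m s"
      unfolding g_def using s0(1) that by (intro Least_le) (blast intro: le_trans)
  qed
  then have ev: "\<forall>\<^sub>F s in sequentially. G m s = g"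
    unfolding eventually_sequentially by blast
  have "G_stable m = g"
    unfolding G_stable_def
  proof (rule the_equality)
    fix g'
    assume "\<forall>\<^sub>F s in sequentially. G m s = g'"
    with ev have "\<forall>\<^sub>F s in sequentially. g' = g"
      by eventually_elim simp
    then show "g' = g"
      by simp
  qed (rule ev)
  with ev show ?thesis
    by simp
qed

lemma G_stable_le:
  assumes "1 \<le> m" and "\<forall>\<^sub>F s in sequentially. G m s \<le> b"
  shows "G_stable m \<le> b"
proof -
  have "\<forall>\<^sub>F s in sequentially. G_stable m \<le> b"
    using assms(2) eventually_G_eq_G_stable[OF assms(1)] by eventually_elim simp
  then show ?thesis
    by simp
qed

lemma G_stable_ge:
  assumes "1 \<le> m" and "\<forall>\<^sub>F s in sequentially. b \<le> G m s"
  shows "b \<le> G_stable m"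
proof -
  have "\<forall>\<^sub>F s in sequentially. b \<le> G_stable m"
    using assms(2) eventually_G_eq_G_stable[OF assms(1)] by eventually_elim simp
  then show ?thesis
    by simp
qed

lemma G_stable_le_pow2_pred:
  assumes "1 \<le> m" and m: "m + 1 = \<sigma> * 2 ^ e" and \<sigma>: "odd \<sigma>"
  shows "G_stable m \<le> 2 ^ e - 1"
proof -
  have "\<forall>\<^sub>F s in sequentially. G m s \<le> 2 ^ e - 1"
    using eventually_ge_at_top[of "max \<sigma> 1"] by eventually_elim (intro G_le_pow2_pred[OF m \<sigma>], auto)
  then show ?thesis
    using assms(1) by (rule G_stable_le[rotated])
qed

lemma G_stable_ge_pow2_pred:
  assumes "1 \<le> m" and e: "m + 1 = 2 ^ e"
  shows "m \<le> G_stable m"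
proof -
  have "\<forall>\<^sub>F s in sequentially. m \<le> G m s"
    using eventually_ge_at_top[of 1] by eventually_elim (rule G_ge_pow2_pred[OF e])
  then show ?thesis
    using assms(1) by (rule G_stable_ge[rotated])
qed

lemma odd_cofactor_gt_2:
  fixes m \<sigma> e :: nat
  assumes "m + 1 = \<sigma> * 2 ^ e" and "odd \<sigma>" and "2 ^ e \<le> m"
  shows "2 < \<sigma>"
proof -
  have "\<sigma> \<noteq> 1"
    using assms(1,3) by auto
  with \<open>odd \<sigma>\<close> show ?thesis
    by presburger
qed

lemma succ_eq_odd_mult_pow2:
  fixes m e :: nat
  assumes "m mod 2 ^ (e + 1) = 2 ^ e - 1"
  shows "m + 1 = (m + 1) div 2 ^ e * 2 ^ e" and "odd ((m + 1) div 2 ^ e)"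
proof -
  define q where "q = m div 2 ^ (e + 1)"
  have "m = q * 2 ^ (e + 1) + (2 ^ e - 1)"
    using div_mult_mod_eq[of m "2 ^ (e + 1)"] assms by (simp add: q_def)
  then have "m + 1 = (2 * q + 1) * 2 ^ e"
    by (simp add: algebra_simps Suc_leI)
  then show "m + 1 = (m + 1) div 2 ^ e * 2 ^ e" "odd ((m + 1) div 2 ^ e)"
    by simp_all
qed

lemma even_imp_mod_pow2_exponent_eq_0:
  fixes m e :: nat
  assumes "m mod 2 ^ (e + 1) = 2 ^ e - 1" and "even m"
  shows "e = 0"
proof -
  have "odd ((m + 1) div 2 ^ e * 2 ^ e)"
    using succ_eq_odd_mult_pow2(1)[OF assms(1)] assms(2) by simp
  then show ?thesis
    by simp
qed

lemma G_stable_eq_pow2_pred: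
  assumes m: "1 \<le> m" and mod: "m mod 2 ^ (e + 1) = 2 ^ e - 1" and "even m \<or> m = 2 ^ e - 1"
  shows "G_stable m = 2 ^ e - 1"
proof -
  have le: "G_stable m \<le> 2 ^ e - 1"
    using m succ_eq_odd_mult_pow2[OF mod] by (intro G_stable_le_pow2_pred)
  show ?thesis
  proof (cases "even m")
    case True
    then show ?thesis
      using le even_imp_mod_pow2_exponent_eq_0[OF mod] by simp
  next
    case False
    with assms(3) have e: "m + 1 = 2 ^ e"
      by simp
    then show ?thesis
      using le G_stable_ge_pow2_pred[OF m e] by linarith
  qed
qed

theorem theorem4p5:
  fixes m e :: nat
  assumes "m \<ge> 1"
    and "m mod 2 ^ (e + 1) = 2 ^ e - 1"
  shows "G_stable m \<le> 2 ^ e - 1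
    \<and> ((even m \<or> m = 2 ^ e - 1) \<longrightarrow> G_stable m = 2 ^ e - 1)
    \<and> (\<forall>s. s \<ge> 2 \<and> real s \<ge> real (m + 1) / 2 ^ e \<longrightarrow> G m s \<le> 2 ^ e - 1)
    \<and> (m > 2 ^ e - 1 \<longrightarrow>
           (let \<sigma> = (m + 1) div 2 ^ e;
                fs = map (\<lambda>i. tp_pow m \<sigma> (tp_add (tp_var i) (tp_var \<sigma>)) (m + 2 ^ e)) [1..<\<sigma>]
            in 2 ^ e dvd (m + 1) \<and> \<sigma> > 2
               \<and> (\<forall>f\<in>set fs. zero_divisor m \<sigma> f)
               \<and> tp_prod m \<sigma> fs \<noteq> tp_zero))"
proof -
  define \<sigma> where "\<sigma> = (m + 1) div 2 ^ e"
  let ?fs = "map (\<lambda>i. tp_pow m \<sigma> (tp_add (tp_var i) (tp_var \<sigma>)) (m + 2 ^ e)) [1..<\<sigma>]"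
  have m: "m + 1 = \<sigma> * 2 ^ e" and \<sigma>: "odd \<sigma>"
    using succ_eq_odd_mult_pow2[OF assms(2)] by (simp_all add: \<sigma>_def)
  have "real (m + 1) / 2 ^ e = real \<sigma>"
    using m by simp
  then have upper: "\<forall>s. s \<ge> 2 \<and> real s \<ge> real (m + 1) / 2 ^ e \<longrightarrow> G m s \<le> 2 ^ e - 1"
    using G_le_pow2_pred[OF m \<sigma>] by auto
  have stable_le: "G_stable m \<le> 2 ^ e - 1"
    using assms(1) m \<sigma> by (rule G_stable_le_pow2_pred)
  have product: "2 ^ e dvd (m + 1) \<and> \<sigma> > 2 \<and> (\<forall>f\<in>set ?fs. zero_divisor m \<sigma> f) \<and> tp_prod m \<sigma> ?fs \<noteq> tp_zero"
    if "m > 2 ^ e - 1"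
  proof -
    from that have e: "2 ^ e \<le> m"
      by simp
    then show ?thesis
      using m odd_cofactor_gt_2[OF m \<sigma> e] tp_prod_pows_var_add_var_nonzero[OF m e \<sigma>]
      by (auto intro!: zero_divisor_pow_var_add_var)
  qed
  show ?thesis
    unfolding Let_def \<sigma>_def[symmetric]
    using stable_le G_stable_eq_pow2_pred[OF assms] upper product by blast
qed

end
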